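(* Let $\Sigma\subset\mathbb C$ be finite, $a\ne b$ in $\Sigma$, and $\sigma,\tau\in G_\Sigma$. For every $c\in\Sigma$ and every $w\in\mathcal A_\Sigma$, $$\frac{d}{dz}\,\mathrm{Li}^{ab}_\Sigma\big(\tau^{-1}(x_cw);\sigma(z)\big)=\left\{\frac{1}{z-(\tau\circ\sigma)^{-1}(c)}-\frac{1}{z-(\tau\circ\sigma)^{-1}(\infty)}\right\}\mathrm{Li}^{ab}_\Sigma\big(\tau^{-1}(w);\sigma(z)\big)$$ (for $z$ with $\sigma(z)$ in the domain of definition, with the convention $1/(z-\infty)=0$). In particular, taking $\tau=\sigma^{-1}$, $\frac{d}{dz}\mathrm{Li}^{ab}_\Sigma(\sigma(x_cw);\sigma(z))=\frac{1}{z-c}\mathrm{Li}^{ab}_\Sigma(\sigma(w);\sigma(z))$, so that $\sum_W\mathrm{Li}^{ab}_\Sigma(\sigma(w);\sigma(z))\,W$ is again a solution of $\frac{dH}{dz}=\big(\sum_{c\in\Sigma}\frac{X_c}{z-c}\big)H$.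
   Context: Let $\Sigma\subset\mathbb C$ be finite. $\mathcal A_\Sigma=\mathbb C\langle x_c: c\in\Sigma\rangle$ is the free non-commutative polynomial algebra on letters $x_c$; monomials are words. The shuffle product $⧢$ is defined recursively by $w ⧢ 1=1 ⧢ w=w$, $l_1w_1 ⧢ l_2w_2=l_1(w_1 ⧢ l_2w_2)+l_2(l_1w_1 ⧢ w_2)$ ($l_i$ letters, $w_i$ words). $\mathcal A^b_\Sigma$ is the span of $1$ and words not ending in $x_b$. For a word $w=x_b^{k_1-1}x_{c_1}\cdots x_b^{k_r-1}x_{c_r}\in\mathcal A^b_\Sigma$ ($k_i\ge1$, $c_i\ne b$), $\mathrm{Li}^b_\Sigma(w;z)=(-1)^r\sum_{m_1>\dots>m_r>0}\prod_{i=1}^r\left(\frac{z-b}{c_i-b}\right)^{m_i-m_{i+1}}m_i^{-k_i}$ ($m_{r+1}=0$) near $b$, $\mathrm{Li}^b_\Sigma(1;z)=1$, extended linearly and continued analytically in $\mathbb C\setminus\Sigma$. For distinct $a,b\in\Sigma$, $\mathrm{Li}^{ab}_\Sigma(\cdot;z)$ is the unique linear $⧢$-homomorphism on $\mathcal A_\Sigma$ agreeing with $\mathrm{Li}^b_\Sigma$ on $\mathcal A^b_\Sigma$ and with $\mathrm{Li}^{ab}_\Sigma(x_b;z)=\log\frac{z-b}{a-b}$ (branches fixed on a simply connected domain in $\mathbb C\setminus\Sigma$). $G_\Sigma$ is the group of Möbius transformations $\sigma\in\mathrm{PSL}(2,\mathbb C)$ with $\sigma(\Sigma\cup\{\infty\})=\Sigma\cup\{\infty\}$.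 It acts on $\mathcal A_\Sigma$ by algebra automorphisms for concatenation determined by $\sigma(x_c)=x_{\sigma(c)}-x_{\sigma(\infty)}$, with the convention $x_\infty:=0$. $\mathbb C\langle\langle X_c\rangle\rangle$ is the non-commutative formal power series algebra; for a word $w=x_{c_1}\cdots x_{c_n}$, $W=X_{c_1}\cdots X_{c_n}$, and $\sum_W$ runs over all words. *)

theory Defs
  imports "HOL-Analysis.Analysis"
begin

text \<open>A word x_{c1}...x_{cn} is the list [c1,...,cn]. A polynomial is a finite
  formal linear combination, represented as a list of (coefficient, word) pairs;
  all functions below are applied linearly, so the representation need not be
  normalised.\<close>

type_synonym ncpoly = "(complex \<times> complex list) list"

definition pmul :: "ncpoly \<Rightarrow> ncpoly \<Rightarrow> ncpoly" where
  "pmul P Q = concat (map (\<lambda>(a, u). map (\<lambda>(b, v). (a * b, u @ v)) Q) P)"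

definition psub :: "ncpoly \<Rightarrow> ncpoly \<Rightarrow> ncpoly" where
  "psub P Q = P @ map (\<lambda>(a, u). (- a, u)) Q"

definition poly_over :: "complex set \<Rightarrow> ncpoly \<Rightarrow> bool" where
  "poly_over S P \<longleftrightarrow> (\<forall>(a, u) \<in> set P. set u \<subseteq> S)"

text \<open>The Riemann sphere is modelled as complex option, None = infinity.\<close>

definition mob_app :: "complex \<Rightarrow> complex \<Rightarrow> complex \<Rightarrow> complex \<Rightarrow> complex option \<Rightarrow> complex option" where
  "mob_app \<alpha> \<beta> \<gamma> \<delta> p =
     (case p of
        None \<Rightarrow> (if \<gamma> = 0 then None else Some (\<alpha> / \<gamma>))
      | Some z \<Rightarrow> (if \<gamma> * z + \<delta> = 0 then None else Some ((\<alpha> * z + \<beta>) / (\<gamma> * z + \<delta>))))"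

definition is_mobius :: "(complex option \<Rightarrow> complex option) \<Rightarrow> bool" where
  "is_mobius f \<longleftrightarrow> (\<exists>\<alpha> \<beta> \<gamma> \<delta>. \<alpha> * \<delta> - \<beta> * \<gamma> \<noteq> 0 \<and> f = mob_app \<alpha> \<beta> \<gamma> \<delta>)"

definition mobius_group :: "complex set \<Rightarrow> (complex option \<Rightarrow> complex option) set" where
  "mobius_group S = {f. is_mobius f \<and> f ` (insert None (Some ` S)) = insert None (Some ` S)}"

text \<open>The letter x_p for a point p of the sphere, with x_\<infinity> = 0.\<close>
fun xl :: "complex option \<Rightarrow> ncpoly" where
  "xl None = []"
| "xl (Some c) = [(1, [c])]"

text \<open>Action on A_S: concatenation-algebra morphism with x_c \<mapsto> x_{f(c)} - x_{f(\<infinity>)}.\<close>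
definition act_word :: "(complex option \<Rightarrow> complex option) \<Rightarrow> complex list \<Rightarrow> ncpoly" where
  "act_word f w = foldr (\<lambda>c P. pmul (psub (xl (f (Some c))) (xl (f None))) P) w [(1, [])]"

definition act :: "(complex option \<Rightarrow> complex option) \<Rightarrow> ncpoly \<Rightarrow> ncpoly" where
  "act f P = concat (map (\<lambda>(a, u). map (\<lambda>(b, v). (a * b, v)) (act_word f u)) P)"

fun rdiff :: "complex \<Rightarrow> complex option \<Rightarrow> complex" where
  "rdiff z None = 0"
| "rdiff z (Some p) = 1 / (z - p)"

fun shuffle :: "'a list \<Rightarrow> 'a list \<Rightarrow> 'a list list" where
  "shuffle [] ys = [ys]"
| "shuffle xs [] = [xs]"
| "shuffle (x # xs) (y # ys) = map ((#) x) (shuffle xs (y # ys)) @ map ((#) y) (shuffle (x # xs) ys)"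

text \<open>blocks b n w decomposes x_b^n w into the list of pairs (k_i, c_i) for
  w = x_b^{k_1-1} x_{c_1} ... x_b^{k_r-1} x_{c_r} (c_i \<noteq> b).\<close>
fun blocks :: "complex \<Rightarrow> nat \<Rightarrow> complex list \<Rightarrow> (nat \<times> complex) list" where
  "blocks b n [] = []"
| "blocks b n (x # xs) = (if x = b then blocks b (Suc n) xs else (Suc n, x) # blocks b 0 xs)"

definition Li_term :: "complex \<Rightarrow> (nat \<times> complex) list \<Rightarrow> nat list \<Rightarrow> complex \<Rightarrow> complex" where
  "Li_term b bl ms z =
     (\<Prod>i<length bl. ((z - b) / (snd (bl ! i) - b)) ^ (ms ! i - (if Suc i < length ms then ms ! Suc i else 0))
                     / of_nat (ms ! i) ^ fst (bl ! i))"

text \<open>Li^b(w;z) for w not ending in x_b, given by the multiple series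
  (-1)^r \<Sum>_{m_1>...>m_r>0} \<Prod>_i ((z-b)/(c_i-b))^{m_i-m_{i+1}} m_i^{-k_i}.\<close>
definition Li_ser :: "complex \<Rightarrow> complex list \<Rightarrow> complex \<Rightarrow> complex" where
  "Li_ser b w z =
     (let bl = blocks b 0 w; r = length bl in
      (-1) ^ r * (\<Sum>\<^sub>\<infinity> ms \<in> {ms. length ms = r \<and> sorted_wrt (>) ms \<and> (\<forall>m \<in> set ms. 0 < m)}.
                    Li_term b bl ms z))"

text \<open>Radius of the disc around b free of other points of S (series converge there).\<close>
definition rad :: "complex set \<Rightarrow> complex \<Rightarrow> real" where
  "rad S b = Min ((\<lambda>c. cmod (c - b)) ` (S - {b}))"

text \<open>Domain data: U is a simply connected domain in \<complex> - S; V is a nonempty open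
  subset of U near b (inside the disc of convergence around b) at which the
  analytic continuation starts.\<close>
definition Li_domain :: "complex set \<Rightarrow> complex \<Rightarrow> complex set \<Rightarrow> complex set \<Rightarrow> bool" where
  "Li_domain S b U V \<longleftrightarrow>
     open U \<and> connected U \<and> simply_connected U \<and> U \<inter> S = {} \<and>
     open V \<and> V \<noteq> {} \<and> V \<subseteq> U \<inter> ball b (rad S b)"

text \<open>L is Li^{ab}_S on U (on words; extended linearly by LiP): holomorphic on U;
  on words not ending in x_b it is the analytic continuation of the series
  (agreement on V); L(x_b) is a branch of log((z-b)/(a-b)); L is a shuffle
  homomorphism.\<close>
definition is_Li_ab :: "complex set \<Rightarrow> complex \<Rightarrow> complex \<Rightarrow> complex set \<Rightarrow> complex set
                        \<Rightarrow> (complex list \<Rightarrow> complex \<Rightarrow> complex) \<Rightarrow> bool" where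
  "is_Li_ab S a b U V L \<longleftrightarrow>
     (\<forall>u. set u \<subseteq> S \<longrightarrow> L u holomorphic_on U) \<and>
     (\<forall>u. set u \<subseteq> S \<and> (u = [] \<or> last u \<noteq> b) \<longrightarrow> (\<forall>z \<in> V. L u z = Li_ser b u z)) \<and>
     (\<forall>z \<in> U. exp (L [b] z) = (z - b) / (a - b)) \<and>
     (\<forall>u v. set u \<subseteq> S \<and> set v \<subseteq> S \<longrightarrow>
        (\<forall>z \<in> U. sum_list (map (\<lambda>x. L x z) (shuffle u v)) = L u z * L v z))"

definition LiP :: "(complex list \<Rightarrow> complex \<Rightarrow> complex) \<Rightarrow> ncpoly \<Rightarrow> complex \<Rightarrow> complex" where
  "LiP L P z = sum_list (map (\<lambda>(a, u). a * L u z) P)"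

end

theory Submission
  imports Defs "HOL-Complex_Analysis.Complex_Analysis"
begin

text \<open>Grouping the multiple series of Li^b(w) by its leading index turns it into a power series in
  z - b, and termwise differentiation gives d/dz Li(x_c w) = Li(w)/(z - c) near b for words not ending
  in x_b; analytic continuation carries this to all of U. For x_b the equation follows from
  exp Li(x_b) = (z - b)/(a - b), and for the other words ending in x_b from the shuffle relation with
  x_b, by induction on the number of trailing letters x_b. Finally \<sigma> sends x_c w to
  (x_{\<sigma> c} - x_{\<sigma> \<infinity>}) \<sigma>(w), and by the chain rule the derivative acquires the factor
  \<sigma>'(z) (1/(\<sigma> z - \<sigma> p) - 1/(\<sigma> z - \<sigma> q)) = 1/(z - p) - 1/(z - q).\<close>

section \<open>The series of Li^b as a power series in z - b\<close>

text \<open>Li_coeff b bl m * (z - b)^m is the part of the series of bl with leading index m_1 = m;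
  the recursion sums over the next index j = m_2 < m.\<close>
fun Li_coeff :: "complex \<Rightarrow> (nat \<times> complex) list \<Rightarrow> nat \<Rightarrow> complex" where
  "Li_coeff b [] m = (if m = 0 then 1 else 0)"
| "Li_coeff b ((k, c) # bl) m =
     (\<Sum>j<m. (c - b) ^ j * Li_coeff b bl j) / ((c - b) ^ m * of_nat m ^ k)"

lemma norm_Li_coeff_Cons_le:
  assumes "0 < R" "R \<le> norm (c - b)"
  shows "norm (Li_coeff b ((k, c) # bl) m) \<le> (\<Sum>j<m. norm (Li_coeff b bl j) / R ^ (m - j))"
proof (cases "m = 0")
  case True
  then show ?thesis by simp
next
  case False
  let ?d = "norm (c - b)"
  have d_pos: "?d > 0" using assms by linarith
  have "norm (Li_coeff b ((k, c) # bl) m)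
        = norm (\<Sum>j<m. (c - b) ^ j * Li_coeff b bl j) / (?d ^ m * real m ^ k)"
    by (simp add: norm_divide norm_mult norm_power)
  also have "\<dots> \<le> norm (\<Sum>j<m. (c - b) ^ j * Li_coeff b bl j) / ?d ^ m"
    using d_pos False by (intro divide_left_mono) (auto simp: mult_le_cancel_left1)
  also have "\<dots> \<le> (\<Sum>j<m. ?d ^ j * norm (Li_coeff b bl j)) / ?d ^ m"
    by (intro divide_right_mono order.trans[OF norm_sum]) (auto simp: norm_mult norm_power)
  also have "\<dots> = (\<Sum>j<m. norm (Li_coeff b bl j) / ?d ^ (m - j))"
    unfolding sum_divide_distrib
  proof (intro sum.cong refl)
    fix j assume "j \<in> {..<m}"
    then have "?d ^ m = ?d ^ j * ?d ^ (m - j)" by (simp flip: power_add)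
    then show "?d ^ j * norm (Li_coeff b bl j) / ?d ^ m = norm (Li_coeff b bl j) / ?d ^ (m - j)"
      using d_pos by (simp add: field_simps)
  qed
  also have "\<dots> \<le> (\<Sum>j<m. norm (Li_coeff b bl j) / R ^ (m - j))"
    using assms d_pos by (intro sum_mono divide_left_mono power_mono) (auto intro!: mult_pos_pos)
  finally show ?thesis .
qed

text \<open>By norm_Li_coeff_Cons_le the series is dominated by a Cauchy product with the geometric series
  of ratio x/R.\<close>
lemma summable_norm_Li_coeff:
  assumes "\<forall>(k, c) \<in> set bl. R \<le> norm (c - b)" "0 \<le> x" "x < R"
  shows "summable (\<lambda>m. norm (Li_coeff b bl m) * x ^ m)"
  using assms(1)
proof (induction bl)
  case Nil
  have "(\<lambda>m. norm (Li_coeff b [] m) * x ^ m) = (\<lambda>m. if m = 0 then 1 else 0)" by auto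
  then show ?case by simp
next
  case (Cons kc bl)
  obtain k c where kc: "kc = (k, c)" by force
  have R_pos: "0 < R" using assms by linarith
  have R_le: "R \<le> norm (c - b)" using Cons.prems kc by auto
  define A where "A j = norm (Li_coeff b bl j) * x ^ j" for j
  define B where "B i = (if i = 0 then 0 else (x / R) ^ i)" for i
  have "summable (\<lambda>j. norm (A j))" using Cons assms(2) by (simp add: A_def abs_mult)
  moreover have "summable (\<lambda>i. norm (B i))"
  proof (rule summable_comparison_test[OF _ summable_geometric])
    show "norm (x / R) < 1" using assms R_pos by simp
  qed (use assms R_pos in \<open>auto simp: B_def\<close>)
  ultimately have summable_prod: "summable (\<lambda>m. \<Sum>j\<le>m. A j * B (m - j))"
    by (rule sums_summable[OF Cauchy_product_sums])
  show ?case unfolding kc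
  proof (rule summable_comparison_test[OF _ summable_prod], intro exI allI impI)
    fix m :: nat
    have "norm (norm (Li_coeff b ((k, c) # bl) m) * x ^ m) = norm (Li_coeff b ((k, c) # bl) m) * x ^ m"
      using assms by simp
    also have "\<dots> \<le> (\<Sum>j<m. norm (Li_coeff b bl j) / R ^ (m - j)) * x ^ m"
      using norm_Li_coeff_Cons_le[OF R_pos R_le] assms by (intro mult_right_mono) auto
    also have "\<dots> = (\<Sum>j<m. A j * B (m - j))"
      unfolding sum_distrib_right
    proof (intro sum.cong refl)
      fix j assume j: "j \<in> {..<m}"
      then have "x ^ m = x ^ j * x ^ (m - j)" by (simp flip: power_add)
      then show "norm (Li_coeff b bl j) / R ^ (m - j) * x ^ m = A j * B (m - j)"
        using j R_pos by (simp add: A_def B_def power_divide field_simps)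
    qed
    also have "\<dots> = (\<Sum>j\<le>m. A j * B (m - j))"
      by (simp add: lessThan_Suc_atMost[symmetric] B_def)
    finally show "norm (norm (Li_coeff b ((k, c) # bl) m) * x ^ m) \<le> (\<Sum>j\<le>m. A j * B (m - j))" .
  qed
qed

definition dec_seqs :: "nat \<Rightarrow> nat list set" where
  "dec_seqs r = {ms. length ms = r \<and> sorted_wrt (>) ms \<and> (\<forall>m \<in> set ms. 0 < m)}"

text \<open>head0 [] = 0 matches the convention m_{r+1} = 0 of the series.\<close>
definition head0 :: "nat list \<Rightarrow> nat" where
  "head0 ms = (case ms of [] \<Rightarrow> 0 | m # _ \<Rightarrow> m)"

definition dec_seqs_head :: "nat \<Rightarrow> nat \<Rightarrow> nat list set" where
  "dec_seqs_head r m = {ms \<in> dec_seqs r. head0 ms = m}"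

lemma head0_ge: "sorted_wrt (>) ms \<Longrightarrow> x \<in> set ms \<Longrightarrow> x \<le> head0 ms"
  by (cases ms) (auto simp: head0_def)

lemma dec_seqs_head_0: "dec_seqs_head 0 m = (if m = 0 then {[]} else {})"
  by (auto simp: dec_seqs_head_def dec_seqs_def head0_def)

lemma dec_seqs_head_Suc: "dec_seqs_head (Suc r) m = Cons m ` (\<Union>j<m. dec_seqs_head r j)"
proof (intro equalityI subsetI)
  fix ms assume "ms \<in> dec_seqs_head (Suc r) m"
  then obtain t where ms: "ms = m # t" and t: "length t = r" "sorted_wrt (>) t" "\<forall>x\<in>set t. 0 < x"
    "\<forall>x\<in>set t. x < m" "0 < m"
    by (cases ms) (auto simp: dec_seqs_head_def dec_seqs_def head0_def)
  have "head0 t < m" using t by (cases t) (auto simp: head0_def)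
  then show "ms \<in> Cons m ` (\<Union>j<m. dec_seqs_head r j)"
    using t ms by (auto simp: dec_seqs_head_def dec_seqs_def)
next
  fix ms assume "ms \<in> Cons m ` (\<Union>j<m. dec_seqs_head r j)"
  then obtain t where ms: "ms = m # t" and t: "t \<in> dec_seqs r" "head0 t < m"
    by (auto simp: dec_seqs_head_def)
  have "\<forall>x\<in>set t. x < m" using head0_ge[of t] t by (fastforce simp: dec_seqs_def)
  then show "ms \<in> dec_seqs_head (Suc r) m"
    using t ms by (auto simp: dec_seqs_head_def dec_seqs_def head0_def)
qed

lemma finite_dec_seqs_head: "finite (dec_seqs_head r m)"
  by (induction r arbitrary: m) (auto simp: dec_seqs_head_0 dec_seqs_head_Suc)

lemma Li_term_Cons:
  assumes "length ms = length bl"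
  shows "Li_term b ((k, c) # bl) (m # ms) z =
           ((z - b) / (c - b)) ^ (m - head0 ms) / of_nat m ^ k * Li_term b bl ms z"
proof -
  let ?F = "\<lambda>i. ((z - b) / (snd (((k, c) # bl) ! i) - b))
                   ^ ((m # ms) ! i - (if Suc i < length (m # ms) then (m # ms) ! Suc i else 0))
                 / of_nat ((m # ms) ! i) ^ fst (((k, c) # bl) ! i)"
  have "Li_term b ((k, c) # bl) (m # ms) z = ?F 0 * (\<Prod>i<length bl. ?F (Suc i))"
    unfolding Li_term_def by (simp add: prod.lessThan_Suc_shift del: prod.lessThan_Suc)
  also have "(\<Prod>i<length bl. ?F (Suc i)) = Li_term b bl ms z"
    unfolding Li_term_def by (intro prod.cong refl) (simp only: nth_Cons_Suc length_Cons Suc_less_eq)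
  also have "?F 0 = ((z - b) / (c - b)) ^ (m - head0 ms) / of_nat m ^ k"
    by (cases ms) (auto simp: head0_def)
  finally show ?thesis .
qed

lemma sum_Li_term_dec_seqs_head:
  assumes "\<forall>(k, c) \<in> set bl. c \<noteq> b"
  shows "(\<Sum>ms\<in>dec_seqs_head (length bl) m. Li_term b bl ms z) = Li_coeff b bl m * (z - b) ^ m"
  using assms
proof (induction bl arbitrary: m)
  case Nil
  then show ?case by (simp add: dec_seqs_head_0 Li_term_def)
next
  case (Cons kc bl)
  obtain k c where kc: "kc = (k, c)" by force
  have cb: "c \<noteq> b" using Cons.prems kc by auto
  have disj: "disjoint_family_on (dec_seqs_head (length bl)) {..<m}"
    by (auto simp: disjoint_family_on_def dec_seqs_head_def)
  have "(\<Sum>ms\<in>dec_seqs_head (length (kc # bl)) m. Li_term b (kc # bl) ms z)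
      = (\<Sum>j<m. \<Sum>t\<in>dec_seqs_head (length bl) j. Li_term b ((k, c) # bl) (m # t) z)"
    by (simp add: dec_seqs_head_Suc kc sum.reindex sum.UNION_disjoint_family finite_dec_seqs_head disj)
  also have "\<dots> = (\<Sum>j<m. ((z - b) / (c - b)) ^ (m - j) / of_nat m ^ k * (Li_coeff b bl j * (z - b) ^ j))"
  proof (intro sum.cong refl)
    fix j
    have "(\<Sum>t\<in>dec_seqs_head (length bl) j. Li_term b ((k, c) # bl) (m # t) z)
        = ((z - b) / (c - b)) ^ (m - j) / of_nat m ^ k * (\<Sum>t\<in>dec_seqs_head (length bl) j. Li_term b bl t z)"
      unfolding sum_distrib_left
      by (intro sum.cong refl) (auto simp: Li_term_Cons dec_seqs_head_def dec_seqs_def)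
    then show "(\<Sum>t\<in>dec_seqs_head (length bl) j. Li_term b ((k, c) # bl) (m # t) z)
        = ((z - b) / (c - b)) ^ (m - j) / of_nat m ^ k * (Li_coeff b bl j * (z - b) ^ j)"
      using Cons by auto
  qed
  also have "\<dots> = Li_coeff b (kc # bl) m * (z - b) ^ m"
    unfolding kc Li_coeff.simps sum_divide_distrib sum_distrib_right
  proof (intro sum.cong refl)
    fix j assume "j \<in> {..<m}"
    then have "(z - b) ^ m = (z - b) ^ (m - j) * (z - b) ^ j"
      and "(c - b) ^ m = (c - b) ^ (m - j) * (c - b) ^ j" by (simp_all flip: power_add)
    then show "((z - b) / (c - b)) ^ (m - j) / of_nat m ^ k * (Li_coeff b bl j * (z - b) ^ j) =
          (c - b) ^ j * Li_coeff b bl j / ((c - b) ^ m * of_nat m ^ k) * (z - b) ^ m"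
      using cb by (simp add: power_divide field_simps)
  qed
  finally show ?case .
qed

text \<open>Replacing z - b and every c_i - b by their absolute values turns each term into its norm;
  this reduces absolute convergence of the multiple series to the power series case.\<close>
definition norm_blocks :: "complex \<Rightarrow> (nat \<times> complex) list \<Rightarrow> (nat \<times> complex) list" where
  "norm_blocks b bl = map (\<lambda>(k, c). (k, complex_of_real (norm (c - b)))) bl"

lemma Li_term_norm_blocks:
  "Li_term 0 (norm_blocks b bl) ms (of_real (norm (z - b))) = of_real (norm (Li_term b bl ms z))"
  unfolding Li_term_def norm_blocks_def
  by (simp add: prod_norm[symmetric] of_real_prod norm_divide norm_power case_prod_beta)

lemma Li_term_abs_summable_on_Sigma:
  assumes bl: "\<forall>(k, c) \<in> set bl. c \<noteq> b \<and> R \<le> norm (c - b)" and z: "norm (z - b) < R"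
  shows "(\<lambda>p. norm (Li_term b bl (snd p) z)) summable_on Sigma UNIV (dec_seqs_head (length bl))"
proof -
  let ?x = "norm (z - b)" and ?nbl = "norm_blocks b bl"
  have nbl: "\<forall>(k, c) \<in> set ?nbl. R \<le> norm (c - 0)" "\<forall>(k, c) \<in> set ?nbl. c \<noteq> 0"
    "length ?nbl = length bl"
    using bl by (auto simp: norm_blocks_def)
  define g where "g m = (\<Sum>ms\<in>dec_seqs_head (length bl) m. norm (Li_term b bl ms z))" for m
  have "norm (g m) \<le> norm (Li_coeff 0 ?nbl m) * ?x ^ m" for m
  proof -
    have "norm (g m) = norm (complex_of_real (g m))" by simp
    also have "complex_of_real (g m) = Li_coeff 0 ?nbl m * of_real ?x ^ m"
      using sum_Li_term_dec_seqs_head[OF nbl(2), where m = m and z = "of_real ?x"] nbl(3)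
      by (simp add: g_def flip: Li_term_norm_blocks)
    finally show ?thesis by (simp add: norm_mult norm_power)
  qed
  then have "summable g"
    by (intro summable_comparison_test[OF _ summable_norm_Li_coeff[OF nbl(1), of ?x]]) (use z in auto)
  moreover have "g m \<ge> 0" for m by (simp add: g_def sum_nonneg)
  ultimately show ?thesis
  proof (intro summable_on_SigmaI[where g = g])
    show "((\<lambda>ms. norm (Li_term b bl (snd (m, ms)) z)) has_sum g m) (dec_seqs_head (length bl) m)" for m
      by (auto simp: g_def finite_dec_seqs_head intro!: has_sum_finiteI)
  qed (auto simp: summable_on_UNIV_nonneg_real_iff)
qed

lemma Li_term_has_sum:
  assumes bl: "\<forall>(k, c) \<in> set bl. c \<noteq> b \<and> R \<le> norm (c - b)" and z: "norm (z - b) < R"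
  shows "((\<lambda>ms. Li_term b bl ms z) has_sum (\<Sum>m. Li_coeff b bl m * (z - b) ^ m)) (dec_seqs (length bl))"
proof -
  let ?r = "length bl"
  have bl_ne: "\<forall>(k, c) \<in> set bl. c \<noteq> b" using bl by auto
  have summable: "summable (\<lambda>m. norm (Li_coeff b bl m * (z - b) ^ m))"
    using summable_norm_Li_coeff[of bl R b "norm (z - b)"] bl z by (auto simp: norm_mult norm_power)
  have has_sum_UNIV:
    "((\<lambda>m. Li_coeff b bl m * (z - b) ^ m) has_sum (\<Sum>m. Li_coeff b bl m * (z - b) ^ m)) UNIV"
    by (rule norm_summable_imp_has_sum[OF summable summable_sums[OF summable_norm_cancel[OF summable]]])
  have has_sum_Sigma: "((\<lambda>p. Li_term b bl (snd p) z) has_sum (\<Sum>m. Li_coeff b bl m * (z - b) ^ m))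
      (Sigma UNIV (dec_seqs_head ?r))"
  proof (rule has_sum_SigmaI[OF _ has_sum_UNIV
        abs_summable_summable[OF Li_term_abs_summable_on_Sigma[OF bl z]]])
    show "((\<lambda>ms. Li_term b bl (snd (m, ms)) z) has_sum Li_coeff b bl m * (z - b) ^ m)
        (dec_seqs_head ?r m)" for m
      using sum_Li_term_dec_seqs_head[OF bl_ne] by (auto simp: finite_dec_seqs_head intro!: has_sum_finiteI)
  qed
  have inj: "inj_on (\<lambda>ms. (head0 ms, ms)) (dec_seqs ?r)"
    by (auto simp: inj_on_def)
  have image: "(\<lambda>ms. (head0 ms, ms)) ` dec_seqs ?r = Sigma UNIV (dec_seqs_head ?r)"
    by (auto simp: dec_seqs_head_def image_iff)
  show ?thesis
    using has_sum_Sigma unfolding image[symmetric] has_sum_reindex[OF inj] by (simp add: o_def)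
qed

lemma blocks_letters: "(k, c) \<in> set (blocks b n w) \<Longrightarrow> c \<in> set w \<and> c \<noteq> b"
  by (induction w arbitrary: n) (auto split: if_splits)

lemma blocks_Suc:
  "blocks b (Suc n) w = (case blocks b n w of [] \<Rightarrow> [] | (k, c) # r \<Rightarrow> (Suc k, c) # r)"
  by (induction w arbitrary: n) auto

lemma blocks_not_Nil: "w \<noteq> [] \<Longrightarrow> last w \<noteq> b \<Longrightarrow> blocks b n w \<noteq> []"
  by (induction w arbitrary: n) (auto split: if_splits)

lemma Li_ser_Nil: "Li_ser b [] z = 1"
proof -
  have "{ms :: nat list. length ms = 0 \<and> sorted_wrt (>) ms \<and> (\<forall>m \<in> set ms. 0 < m)} = {[]}"
    by auto
  then show ?thesis by (simp add: Li_ser_def Li_term_def)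
qed

definition Li_pser :: "complex \<Rightarrow> (nat \<times> complex) list \<Rightarrow> complex \<Rightarrow> complex" where
  "Li_pser b bl x = (\<Sum>m. Li_coeff b bl m * x ^ m)"

definition Li_pser_word :: "complex \<Rightarrow> complex list \<Rightarrow> complex \<Rightarrow> complex" where
  "Li_pser_word b w x = (-1) ^ length (blocks b 0 w) * Li_pser b (blocks b 0 w) x"

lemma Li_ser_eq_Li_pser_word:
  assumes "\<forall>c\<in>set w. c \<noteq> b \<longrightarrow> R \<le> norm (c - b)" "norm (z - b) < R"
  shows "Li_ser b w z = Li_pser_word b w (z - b)"
proof -
  have "\<forall>(k, c) \<in> set (blocks b 0 w). c \<noteq> b \<and> R \<le> norm (c - b)"
    using assms(1) blocks_letters by fastforce
  from infsumI[OF Li_term_has_sum[OF this assms(2)]] show ?thesis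
    by (simp add: Li_ser_def Li_pser_word_def Li_pser_def dec_seqs_def Let_def)
qed

lemma summable_Li_pser:
  assumes "\<forall>(k, c) \<in> set bl. R \<le> norm (c - b)" "norm x < R"
  shows "summable (\<lambda>m. norm (Li_coeff b bl m * x ^ m))" "summable (\<lambda>m. Li_coeff b bl m * x ^ m)"
proof -
  show *: "summable (\<lambda>m. norm (Li_coeff b bl m * x ^ m))"
    using summable_norm_Li_coeff[OF assms(1), of "norm x"] assms(2) by (simp add: norm_mult norm_power)
  show "summable (\<lambda>m. Li_coeff b bl m * x ^ m)" using summable_norm_cancel[OF *] .
qed

lemma Li_pser_has_derivative:
  assumes "\<forall>(k, c) \<in> set bl. R \<le> norm (c - b)" "norm x < R"
  shows "(Li_pser b bl has_field_derivative (\<Sum>n. diffs (Li_coeff b bl) n * x ^ n)) (at x)"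
  unfolding Li_pser_def
  by (rule termdiffs_strong'[where K = R]) (use summable_Li_pser[OF assms(1)] assms(2) in auto)

lemma diffs_Li_coeff_Suc: "diffs (Li_coeff b ((Suc k, c) # bl)) n = Li_coeff b ((k, c) # bl) (Suc n)"
proof -
  have "of_nat (Suc n) * (A / (B * (of_nat (Suc n) * C))) = A / (B * C)" for A B C :: complex
    by (cases "B * C = 0") (auto simp del: of_nat_Suc)
  then show ?thesis
    by (simp only: diffs_def Li_coeff.simps power_Suc[of "of_nat (Suc n) :: complex" k])
qed

lemma Li_pser_Suc_has_derivative:
  assumes "\<forall>(k, c) \<in> set ((Suc k, c) # bl). R \<le> norm (c - b)" "norm x < R" "x \<noteq> 0"
  shows "(Li_pser b ((Suc k, c) # bl) has_field_derivative Li_pser b ((k, c) # bl) x / x) (at x)"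
proof -
  let ?f = "\<lambda>m. Li_coeff b ((k, c) # bl) m * x ^ m"
  have "summable ?f" using summable_Li_pser(2)[of "(k, c) # bl" R b x] assms(1,2) by auto
  have "(\<Sum>n. diffs (Li_coeff b ((Suc k, c) # bl)) n * x ^ n) = (\<Sum>n. ?f (Suc n) / x)"
    using assms(3) by (simp add: diffs_Li_coeff_Suc del: Li_coeff.simps)
  also have "\<dots> = (\<Sum>n. ?f (Suc n)) / x"
    by (rule suminf_divide) (use \<open>summable ?f\<close> summable_Suc_iff[of ?f] in \<open>simp del: Li_coeff.simps\<close>)
  also have "\<dots> = Li_pser b ((k, c) # bl) x / x"
    using suminf_split_head[OF \<open>summable ?f\<close>] by (simp add: Li_pser_def)
  finally show ?thesis using Li_pser_has_derivative[OF assms(1,2)] by simp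
qed

lemma sums_power_div_power_Suc:
  fixes x d :: "'a :: real_normed_field"
  assumes "norm x < norm d"
  shows "(\<lambda>i. x ^ i / d ^ Suc i) sums (1 / (d - x))"
proof -
  have d: "d \<noteq> 0" "d - x \<noteq> 0" using assms by auto
  have ratio: "norm (x / d) < 1" using assms d by (simp add: norm_divide field_simps)
  have "(\<lambda>i. (x / d) ^ i / d) sums (1 / (1 - x / d) / d)"
    by (rule sums_divide[OF geometric_sums[OF ratio]])
  moreover have "1 / (1 - x / d) / d = 1 / (d - x)"
    using d by (simp add: field_simps)
  ultimately show ?thesis by (simp add: power_divide mult.commute)
qed

lemma diffs_Li_coeff_one:
  assumes "c \<noteq> b"
  shows "diffs (Li_coeff b ((Suc 0, c) # bl)) n * x ^ n
    = (\<Sum>j\<le>n. Li_coeff b bl j * x ^ j * (x ^ (n - j) / (c - b) ^ Suc (n - j)))"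
proof -
  have "diffs (Li_coeff b ((Suc 0, c) # bl)) n * x ^ n
        = (\<Sum>j<Suc n. (c - b) ^ j * Li_coeff b bl j) / (c - b) ^ Suc n * x ^ n"
    unfolding diffs_Li_coeff_Suc by (simp del: sum.lessThan_Suc)
  also have "\<dots> = (\<Sum>j\<le>n. Li_coeff b bl j * x ^ j * (x ^ (n - j) / (c - b) ^ Suc (n - j)))"
    unfolding lessThan_Suc_atMost sum_divide_distrib sum_distrib_right
  proof (intro sum.cong refl)
    fix j assume "j \<in> {..n}"
    then have x_n: "x ^ n = x ^ j * x ^ (n - j)" and d_n: "(c - b) ^ Suc n = (c - b) ^ j * (c - b) ^ Suc (n - j)"
      by (simp_all flip: power_add add: Suc_diff_le)
    show "(c - b) ^ j * Li_coeff b bl j / (c - b) ^ Suc n * x ^ n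
        = Li_coeff b bl j * x ^ j * (x ^ (n - j) / (c - b) ^ Suc (n - j))"
      unfolding x_n d_n using assms by (simp add: field_simps)
  qed
  finally show ?thesis .
qed

text \<open>For a leading block (1, c) the derivative is the Cauchy product of the remaining series with
  the geometric series of 1/(c - b - x).\<close>
lemma Li_pser_one_has_derivative:
  assumes "\<forall>(k, c) \<in> set ((Suc 0, c) # bl). R \<le> norm (c - b)" "norm x < R" "0 < R"
  shows "(Li_pser b ((Suc 0, c) # bl) has_field_derivative Li_pser b bl x / (c - b - x)) (at x)"
proof -
  have bl: "\<forall>(k, c) \<in> set bl. R \<le> norm (c - b)" and R_le: "R \<le> norm (c - b)" using assms(1) by auto
  have x_lt: "norm x < norm (c - b)" and "c \<noteq> b" using R_le assms(2,3) by auto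
  have "summable (\<lambda>i. norm x ^ i / norm (c - b) ^ Suc i)"
    using sums_summable[OF sums_power_div_power_Suc[of "norm x" "norm (c - b)"]] x_lt by simp
  then have geometric: "summable (\<lambda>i. norm (x ^ i / (c - b) ^ Suc i))"
    by (simp add: norm_divide norm_power norm_mult)
  have "(\<Sum>n. diffs (Li_coeff b ((Suc 0, c) # bl)) n * x ^ n)
      = (\<Sum>n. \<Sum>j\<le>n. Li_coeff b bl j * x ^ j * (x ^ (n - j) / (c - b) ^ Suc (n - j)))"
    using diffs_Li_coeff_one[OF \<open>c \<noteq> b\<close>] by simp
  also have "\<dots> = Li_pser b bl x * (\<Sum>i. x ^ i / (c - b) ^ Suc i)"
    unfolding Li_pser_def
    by (rule Cauchy_product[OF summable_Li_pser(1)[OF bl assms(2)] geometric, symmetric])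
  also have "(\<Sum>i. x ^ i / (c - b) ^ Suc i) = 1 / (c - b - x)"
    using sums_unique[OF sums_power_div_power_Suc[OF x_lt]] by simp
  finally show ?thesis using Li_pser_has_derivative[OF assms(1,2)] by (simp del: Li_coeff.simps)
qed

lemma Li_pser_word_Cons_has_derivative:
  assumes R: "\<forall>c\<in>set (p # w). c \<noteq> b \<longrightarrow> R \<le> norm (c - b)"
    and x: "norm x < R" "x \<noteq> 0" and last: "last (p # w) \<noteq> b"
  shows "(Li_pser_word b (p # w) has_field_derivative Li_pser_word b w x / (x + b - p)) (at x)"
proof -
  have blocks_R: "\<forall>(k, c) \<in> set (blocks b n u). R \<le> norm (c - b)" if "set u \<subseteq> set (p # w)" for n u
    using R that blocks_letters by fastforce
  show ?thesis
  proof (cases "p = b")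
    case True
    then have "w \<noteq> []" "last w \<noteq> b" using last by (auto split: if_splits)
    then obtain k c r where bw: "blocks b 0 w = (k, c) # r"
      using blocks_not_Nil by (metis list.exhaust prod.exhaust)
    have bl: "blocks b 0 (p # w) = (Suc k, c) # r" using True bw by (simp add: blocks_Suc)
    have d: "(Li_pser b ((Suc k, c) # r) has_field_derivative Li_pser b ((k, c) # r) x / x) (at x)"
      by (rule Li_pser_Suc_has_derivative[OF _ x]) (use blocks_R[of "p # w" 0] bl in auto)
    show ?thesis
      using DERIV_cmult[OF d, of "(-1) ^ Suc (length r)"] True bw bl by (simp add: Li_pser_word_def[abs_def])
  next
    case False
    have bl: "blocks b 0 (p # w) = (Suc 0, p) # blocks b 0 w" using False by simp
    have R_pos: "0 < R" using x by (meson norm_ge_zero le_less_trans)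
    have d: "(Li_pser b (blocks b 0 (p # w)) has_field_derivative
        Li_pser b (blocks b 0 w) x / (p - b - x)) (at x)"
      unfolding bl
      by (rule Li_pser_one_has_derivative[OF _ x(1) R_pos]) (use blocks_R[of "p # w" 0] bl in auto)
    have "- (X / (p - b - x)) = X / (x + b - p)" for X :: complex
      by (metis minus_diff_eq minus_divide_right diff_diff_eq2 add.commute)
    then show ?thesis
      using DERIV_cmult[OF d, of "(-1) ^ length (blocks b 0 (p # w))"] bl
      by (simp add: Li_pser_word_def[abs_def])
  qed
qed

lemma Li_ser_has_derivative:
  assumes R: "\<forall>c\<in>set (p # w). c \<noteq> b \<longrightarrow> R \<le> norm (c - b)"
    and z: "norm (z - b) < R" "z \<noteq> b" and last: "last (p # w) \<noteq> b"
  shows "(Li_ser b (p # w) has_field_derivative Li_ser b w z / (z - p)) (at z)"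
proof -
  have "(Li_pser_word b (p # w) has_field_derivative Li_pser_word b w (z - b) / (z - p)) (at (z - b))"
    using Li_pser_word_Cons_has_derivative[OF R _ _ last, of "z - b"] z by simp
  then have "((\<lambda>y. Li_pser_word b (p # w) (y - b)) has_field_derivative Li_ser b w z / (z - p)) (at z)"
    using DERIV_shift[of "Li_pser_word b (p # w)" _ z "- b"] Li_ser_eq_Li_pser_word[of w b R z] R z(1)
    by simp
  then show ?thesis
    by (rule has_field_derivative_transform_within_open[where S = "ball b R"])
       (use Li_ser_eq_Li_pser_word[OF R] z in \<open>auto simp: dist_norm norm_minus_commute\<close>)
qed

lemma rad_le: "finite S \<Longrightarrow> c \<in> S \<Longrightarrow> c \<noteq> b \<Longrightarrow> rad S b \<le> norm (c - b)"
  unfolding rad_def by (intro Min_le) auto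


section \<open>Shuffles\<close>

lemma set_shuffle_subset: "x \<in> set (shuffle u v) \<Longrightarrow> set x \<subseteq> set u \<union> set v"
  by (induction u v arbitrary: x rule: shuffle.induct) fastforce+

lemma shuffle_singleton_right: "y \<in> set (shuffle v [c]) \<Longrightarrow> \<exists>i. y = take i v @ c # drop i v"
proof (induction v arbitrary: y)
  case Nil
  then show ?case by auto
next
  case (Cons x v)
  show ?case
  proof (cases "y = c # x # v")
    case True
    then show ?thesis by (intro exI[of _ 0]) simp
  next
    case False
    then obtain y' where "y = x # y'" "y' \<in> set (shuffle v [c])" using Cons.prems by auto
    with Cons.IH obtain i where "y' = take i v @ c # drop i v" by blast
    with \<open>y = x # y'\<close> show ?thesis by (intro exI[of _ "Suc i"]) simp
  qed
qed

lemma snoc_in_shuffle_singleton: "v @ [c] \<in> set (shuffle v [c])"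
  by (induction v) auto

definition trailing :: "'a \<Rightarrow> 'a list \<Rightarrow> nat" where
  "trailing b x = length (takeWhile (\<lambda>y. y = b) (rev x))"

lemma trailing_snoc: "trailing b (v @ [b]) = Suc (trailing b v)"
  by (simp add: trailing_def)

lemma trailing_insert_le:
  assumes "y = take i v @ b # drop i v" "y \<noteq> v @ [b]"
  shows "trailing b y \<le> trailing b v"
proof -
  have "\<exists>t\<in>set (drop i v). t \<noteq> b"
  proof (rule ccontr)
    assume "\<not> ?thesis"
    then have "drop i v = replicate (length (drop i v)) b" by (metis replicate_length_same)
    then have "b # drop i v = drop i v @ [b]" by (metis replicate_Suc replicate_append_same)
    then show False using assms by (metis append_assoc append_take_drop_id append_Cons append_Nil)
  qed
  then obtain t where t: "t \<in> set (rev (drop i v))" "t \<noteq> b" by auto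
  have "rev v = rev (drop i v) @ rev (take i v)" by (metis append_take_drop_id rev_append)
  then have "trailing b v = length (takeWhile (\<lambda>y. y = b) (rev (drop i v)))"
    using t by (simp add: trailing_def takeWhile_append1)
  moreover have "trailing b y = length (takeWhile (\<lambda>y. y = b) (rev (drop i v)))"
    using assms(1) t by (auto simp: trailing_def)
  ultimately show ?thesis by simp
qed

lemma trailing_shuffle_singleton_less:
  assumes "y \<in> set (shuffle v [b])" "y \<noteq> v @ [b]"
  shows "trailing b y < trailing b (v @ [b])"
proof -
  obtain i where "y = take i v @ b # drop i v" using shuffle_singleton_right[OF assms(1)] by blast
  then have "trailing b y \<le> trailing b v" using assms(2) by (rule trailing_insert_le)
  then show ?thesis by (simp add: trailing_snoc)
qed

lemma sum_list_map_eq_count_list: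
  assumes "\<forall>y\<in>set xs. y \<noteq> t \<longrightarrow> f y = 0"
  shows "sum_list (map f xs) = of_nat (count_list xs t) * (f t :: 'a :: semiring_1)"
  using assms by (induction xs) (auto simp: algebra_simps)

lemma sum_list_divide_distrib: "(\<Sum>x\<leftarrow>xs. f x / c) = (\<Sum>x\<leftarrow>xs. f x) / (c :: 'a :: field)"
  by (induction xs) (simp_all add: add_divide_distrib)

lemma has_field_derivative_sum_list:
  assumes "\<And>x. x \<in> set xs \<Longrightarrow> (f x has_field_derivative f' x) (at s)"
  shows "((\<lambda>y. \<Sum>x\<leftarrow>xs. f x y) has_field_derivative (\<Sum>x\<leftarrow>xs. f' x)) (at s)"
  using assms by (induction xs) (auto intro!: derivative_intros)


section \<open>The differential equation of Li^{ab}\<close>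

locale Li_ab =
  fixes S :: "complex set" and a b :: complex and U V :: "complex set"
    and L :: "complex list \<Rightarrow> complex \<Rightarrow> complex"
  assumes finite_S: "finite S" and b_in_S: "b \<in> S" and a_ne_b: "a \<noteq> b"
    and domain: "Li_domain S b U V" and is_Li_ab: "is_Li_ab S a b U V L"
begin

lemma open_U: "open U" and connected_U: "connected U" and U_disjoint: "U \<inter> S = {}"
  and open_V: "open V" and V_ne: "V \<noteq> {}" and V_subset_U: "V \<subseteq> U"
  and V_subset_ball: "V \<subseteq> ball b (rad S b)"
  using domain by (auto simp: Li_domain_def)

lemma holomorphic_L: "set u \<subseteq> S \<Longrightarrow> L u holomorphic_on U"
  using is_Li_ab by (auto simp: is_Li_ab_def)

lemma L_eq_Li_ser: "set u \<subseteq> S \<Longrightarrow> u = [] \<or> last u \<noteq> b \<Longrightarrow> z \<in> V \<Longrightarrow> L u z = Li_ser b u z"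
  using is_Li_ab by (auto simp: is_Li_ab_def)

lemma exp_L_b: "z \<in> U \<Longrightarrow> exp (L [b] z) = (z - b) / (a - b)"
  using is_Li_ab by (auto simp: is_Li_ab_def)

lemma L_shuffle: "set u \<subseteq> S \<Longrightarrow> set v \<subseteq> S \<Longrightarrow> z \<in> U \<Longrightarrow>
    (\<Sum>x\<leftarrow>shuffle u v. L x z) = L u z * L v z"
  using is_Li_ab by (auto simp: is_Li_ab_def)

lemma not_in_S: "z \<in> U \<Longrightarrow> z \<notin> S"
  using U_disjoint by auto

lemma L_has_derivative: "set u \<subseteq> S \<Longrightarrow> s \<in> U \<Longrightarrow> (L u has_field_derivative deriv (L u) s) (at s)"
  using holomorphic_derivI[OF holomorphic_L open_U] .

lemma L_Nil:
  assumes "z \<in> U" shows "L [] z = 1"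
proof (rule analytic_continuation_open[where s = V and s' = U and f = "L []" and g = "\<lambda>_. 1"])
  show "L [] y = 1" if "y \<in> V" for y
    using L_eq_Li_ser[of "[]" y] that by (simp add: Li_ser_Nil)
qed (use assms open_U open_V V_ne V_subset_U connected_U holomorphic_L[of "[]"] in auto)

lemma deriv_L_Cons:
  assumes u: "set (p # w) \<subseteq> S" and last: "last (p # w) \<noteq> b" and s: "s \<in> U"
  shows "deriv (L (p # w)) s = L w s / (s - p)"
proof -
  have deriv_on_V: "deriv (L (p # w)) z = L w z / (z - p)" if z: "z \<in> V" for z
  proof -
    have R: "\<forall>c\<in>set (p # w). c \<noteq> b \<longrightarrow> rad S b \<le> norm (c - b)"
      using u rad_le[OF finite_S] by auto
    have "norm (z - b) < rad S b" "z \<noteq> b"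
      using z V_subset_ball V_subset_U not_in_S b_in_S by (auto simp: dist_norm norm_minus_commute)
    from Li_ser_has_derivative[OF R this last]
    have "(L (p # w) has_field_derivative Li_ser b w z / (z - p)) (at z)"
      by (rule has_field_derivative_transform_within_open[OF _ open_V z])
         (use L_eq_Li_ser[OF u] last in auto)
    moreover have "w = [] \<or> last w \<noteq> b" using last by auto
    then have "L w z = Li_ser b w z" using L_eq_Li_ser[of w z] u z by auto
    ultimately show ?thesis by (simp add: DERIV_imp_deriv)
  qed
  have "p \<notin> U" using u not_in_S by auto
  show ?thesis
    by (rule analytic_continuation_open[where s = V and s' = U and f = "deriv (L (p # w))"
          and g = "\<lambda>s. L w s / (s - p)"])
       (use \<open>p \<notin> U\<close> open_U open_V V_ne V_subset_U connected_U deriv_on_V s holomorphic_L u in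
         \<open>auto intro!: holomorphic_intros holomorphic_deriv\<close>)
qed

lemma deriv_L_b:
  assumes s: "s \<in> U" shows "deriv (L [b]) s = 1 / (s - b)"
proof -
  have d1: "((\<lambda>z. exp (L [b] z)) has_field_derivative exp (L [b] s) * deriv (L [b]) s) (at s)"
    using DERIV_chain2[OF DERIV_exp L_has_derivative[of "[b]"]] b_in_S s by simp
  have "((\<lambda>z. (z - b) / (a - b)) has_field_derivative 1 / (a - b)) (at s)"
    using a_ne_b by (auto intro!: derivative_eq_intros)
  then have d2: "((\<lambda>z. exp (L [b] z)) has_field_derivative 1 / (a - b)) (at s)"
    by (rule has_field_derivative_transform_within_open[OF _ open_U s]) (simp add: exp_L_b)
  have "(s - b) / (a - b) * deriv (L [b]) s = 1 / (a - b)"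
    using DERIV_unique[OF d1 d2] exp_L_b[OF s] by simp
  moreover have "s \<noteq> b" using not_in_S[OF s] b_in_S by auto
  ultimately show ?thesis using a_ne_b by (simp add: field_simps)
qed

lemma deriv_L_shuffle:
  assumes u: "set u \<subseteq> S" and v: "set v \<subseteq> S" and s: "s \<in> U"
  shows "(\<Sum>x\<leftarrow>shuffle u v. deriv (L x) s) = deriv (L u) s * L v s + L u s * deriv (L v) s"
proof -
  have "((\<lambda>y. \<Sum>x\<leftarrow>shuffle u v. L x y) has_field_derivative (\<Sum>x\<leftarrow>shuffle u v. deriv (L x) s)) (at s)"
  proof (rule has_field_derivative_sum_list)
    fix x assume "x \<in> set (shuffle u v)"
    then have "set x \<subseteq> S" using set_shuffle_subset u v by blast
    then show "(L x has_field_derivative deriv (L x) s) (at s)" using L_has_derivative s by blast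
  qed
  moreover have "((\<lambda>y. \<Sum>x\<leftarrow>shuffle u v. L x y) has_field_derivative
      deriv (L u) s * L v s + L u s * deriv (L v) s) (at s)"
  proof (rule has_field_derivative_transform_within_open[OF _ open_U s])
    show "((\<lambda>y. L u y * L v y) has_field_derivative deriv (L u) s * L v s + L u s * deriv (L v) s) (at s)"
      using DERIV_mult[OF L_has_derivative[OF u s] L_has_derivative[OF v s]] by (simp add: mult.commute)
  qed (simp add: L_shuffle[OF u v])
  ultimately show ?thesis by (rule DERIV_unique)
qed

definition Li_deriv_rhs :: "complex list \<Rightarrow> complex \<Rightarrow> complex" where
  "Li_deriv_rhs x s = (case x of [] \<Rightarrow> 0 | p # w \<Rightarrow> L w s / (s - p))"

lemma Li_deriv_rhs_shuffle:
  assumes "set u \<subseteq> S" "set v \<subseteq> S" "s \<in> U"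
  shows "(\<Sum>x\<leftarrow>shuffle u v. Li_deriv_rhs x s) = Li_deriv_rhs u s * L v s + L u s * Li_deriv_rhs v s"
  using assms(1,2)
proof (induction u v rule: shuffle.induct)
  case (3 x xs y ys)
  have "(\<Sum>w\<leftarrow>shuffle (x # xs) (y # ys). Li_deriv_rhs w s)
      = (\<Sum>w\<leftarrow>shuffle xs (y # ys). L w s) / (s - x) + (\<Sum>w\<leftarrow>shuffle (x # xs) ys. L w s) / (s - y)"
    by (simp add: Li_deriv_rhs_def o_def sum_list_divide_distrib)
  also have "\<dots> = L xs s * L (y # ys) s / (s - x) + L (x # xs) s * L ys s / (s - y)"
    using 3 assms(3) by (simp add: L_shuffle)
  finally show ?case by (simp add: Li_deriv_rhs_def)
qed (use L_Nil[OF assms(3)] in \<open>simp_all add: Li_deriv_rhs_def\<close>)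

text \<open>Both deriv L and Li_deriv_rhs are derivations for the shuffle product, so the shuffle
  relation for v and x_b expresses the word v x_b through words with fewer trailing letters x_b.\<close>
lemma deriv_L_eq_Li_deriv_rhs:
  assumes "set x \<subseteq> S" "s \<in> U"
  shows "deriv (L x) s = Li_deriv_rhs x s"
  using assms
proof (induction "trailing b x" arbitrary: x rule: less_induct)
  case less
  define D where "D y = deriv (L y) s - Li_deriv_rhs y s" for y
  consider "x = []" | p w where "x = p # w" "last x \<noteq> b" | v where "x = v @ [b]"
    by (metis append_butlast_last_id neq_Nil_conv)
  then show ?case
  proof cases
    case 1
    have "((\<lambda>_. 1) has_field_derivative 0) (at s)" by simp
    then have "(L [] has_field_derivative 0) (at s)"
      by (rule has_field_derivative_transform_within_open[OF _ open_U less.prems(2)]) (simp add: L_Nil)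
    then show ?thesis using 1 by (simp add: DERIV_imp_deriv Li_deriv_rhs_def)
  next
    case 2
    then show ?thesis using deriv_L_Cons less.prems by (simp add: Li_deriv_rhs_def)
  next
    case 3
    have v: "set v \<subseteq> S" and b: "set [b] \<subseteq> S" using less.prems 3 b_in_S by auto
    have "D v = 0" using less.hyps[of v] less.prems(2) 3 v by (simp add: D_def trailing_snoc)
    moreover have "D [b] = 0"
      using deriv_L_b[OF less.prems(2)] L_Nil[OF less.prems(2)] by (simp add: D_def Li_deriv_rhs_def)
    moreover have "(\<Sum>y\<leftarrow>shuffle v [b]. D y) = D v * L [b] s + L v s * D [b]"
      unfolding D_def sum_list_subtractf
      using deriv_L_shuffle[OF v b less.prems(2)] Li_deriv_rhs_shuffle[OF v b less.prems(2)]
      by (simp add: algebra_simps)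
    ultimately have sum_D: "(\<Sum>y\<leftarrow>shuffle v [b]. D y) = 0" by simp
    have "\<forall>y\<in>set (shuffle v [b]). y \<noteq> v @ [b] \<longrightarrow> D y = 0"
    proof (intro ballI impI)
      fix y assume y: "y \<in> set (shuffle v [b])" "y \<noteq> v @ [b]"
      have "trailing b y < trailing b x" using trailing_shuffle_singleton_less[OF y] 3 by simp
      moreover have "set y \<subseteq> S" using set_shuffle_subset[OF y(1)] v b by auto
      ultimately show "D y = 0" using less.hyps less.prems(2) by (simp add: D_def)
    qed
    from sum_list_map_eq_count_list[OF this] sum_D
    have "of_nat (count_list (shuffle v [b]) (v @ [b])) * D (v @ [b]) = 0" by simp
    moreover have "count_list (shuffle v [b]) (v @ [b]) \<noteq> 0"
      using snoc_in_shuffle_singleton[of v b] by (simp add: count_list_0_iff)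
    ultimately show ?thesis using 3 by (simp add: D_def)
  qed
qed

lemma L_Cons_has_derivative:
  assumes "set (p # w) \<subseteq> S" "s \<in> U"
  shows "(L (p # w) has_field_derivative L w s / (s - p)) (at s)"
  using L_has_derivative[OF assms] deriv_L_eq_Li_deriv_rhs[OF assms] by (simp add: Li_deriv_rhs_def)

end

section \<open>The action of Moebius transformations\<close>

abbreviation with_infty :: "complex set \<Rightarrow> complex option set" where
  "with_infty S \<equiv> insert None (Some ` S)"

lemma pmul_letter: "pmul [(1, [c])] Q = map (\<lambda>(\<beta>, v). (\<beta>, c # v)) Q"
  by (simp add: pmul_def case_prod_beta)

lemma pmul_Cons: "pmul ((a, u) # A) Q = map (\<lambda>(b, v). (a * b, u @ v)) Q @ pmul A Q"
  by (simp add: pmul_def)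

lemma pmul_append: "pmul (A @ B) Q = pmul A Q @ pmul B Q"
  by (simp add: pmul_def)

lemma act_word_Cons: "act_word f (c # u) = pmul (psub (xl (f (Some c))) (xl (f None))) (act_word f u)"
  by (simp add: act_word_def)

lemma LiP_append: "LiP L (P @ Q) y = LiP L P y + LiP L Q y"
  by (simp add: LiP_def)

lemma LiP_scale: "LiP L (map (\<lambda>(\<beta>, v). (\<alpha> * \<beta>, v)) Q) y = \<alpha> * LiP L Q y"
  by (induction Q) (auto simp: LiP_def algebra_simps)

lemma LiP_act: "LiP L (act f P) y = (\<Sum>x\<leftarrow>P. fst x * LiP L (act_word f (snd x)) y)"
proof (induction P)
  case Nil
  then show ?case by (simp add: act_def LiP_def)
next
  case (Cons x P)
  have "act f (x # P) = map (\<lambda>(\<beta>, v). (fst x * \<beta>, v)) (act_word f (snd x)) @ act f P"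
    by (simp add: act_def case_prod_beta)
  then show ?case using Cons by (simp add: LiP_append LiP_scale)
qed

lemma LiP_pmul_uminus: "LiP L (pmul (map (\<lambda>(a, u). (- a, u)) A) Q) y = - LiP L (pmul A Q) y"
proof (induction A)
  case Nil
  then show ?case by (simp add: pmul_def LiP_def)
next
  case (Cons x A)
  obtain a u where x: "x = (a, u)" by force
  have "LiP L (map (\<lambda>(b, v). (- a * b, u @ v)) Q) y = - LiP L (map (\<lambda>(b, v). (a * b, u @ v)) Q) y"
    by (induction Q) (auto simp: LiP_def)
  then show ?case using Cons by (simp add: x pmul_Cons LiP_append)
qed

lemma LiP_pmul_psub: "LiP L (pmul (psub A B) Q) y = LiP L (pmul A Q) y - LiP L (pmul B Q) y"
  by (simp add: psub_def pmul_append LiP_append LiP_pmul_uminus)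

lemma poly_over_set_snd: "poly_over S P \<Longrightarrow> x \<in> set P \<Longrightarrow> set (snd x) \<subseteq> S"
  by (cases x) (auto simp: poly_over_def)

lemma poly_over_pmul: "poly_over S A \<Longrightarrow> poly_over S B \<Longrightarrow> poly_over S (pmul A B)"
  unfolding poly_over_def pmul_def by fastforce

lemma poly_over_psub: "poly_over S A \<Longrightarrow> poly_over S B \<Longrightarrow> poly_over S (psub A B)"
  by (auto simp: poly_over_def psub_def)

lemma poly_over_xl: "p \<in> with_infty S \<Longrightarrow> poly_over S (xl p)"
  by (auto simp: poly_over_def)

lemma poly_over_act_word:
  assumes "f ` with_infty S \<subseteq> with_infty S" "set u \<subseteq> S"
  shows "poly_over S (act_word f u)"
  using assms(2)
proof (induction u)
  case Nil
  then show ?case by (simp add: act_word_def poly_over_def)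
next
  case (Cons c u)
  have "f (Some c) \<in> with_infty S" "f None \<in> with_infty S" using assms(1) Cons.prems by auto
  with Cons show ?case by (simp add: act_word_Cons poly_over_pmul poly_over_psub poly_over_xl)
qed

lemma mob_app_inverse:
  assumes "\<alpha> * \<delta> - \<beta> * \<gamma> \<noteq> 0"
  shows "mob_app \<delta> (-\<beta>) (-\<gamma>) \<alpha> (mob_app \<alpha> \<beta> \<gamma> \<delta> p) = p"
proof (cases p)
  case None
  then show ?thesis using assms by (cases "\<gamma> = 0") (auto simp: mob_app_def field_simps)
next
  case (Some z)
  show ?thesis
  proof (cases "\<gamma> * z + \<delta> = 0")
    case True
    then have "\<gamma> \<noteq> 0" "\<delta> = - (\<gamma> * z)" using assms by (auto simp: add_eq_0_iff2)
    then show ?thesis using True Some by (auto simp: mob_app_def field_simps)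
  next
    case False
    define w where "w = (\<alpha> * z + \<beta>) / (\<gamma> * z + \<delta>)"
    have "- \<gamma> * w + \<alpha> = (\<alpha> * \<delta> - \<beta> * \<gamma>) / (\<gamma> * z + \<delta>)"
      and "\<delta> * w + - \<beta> = (\<alpha> * \<delta> - \<beta> * \<gamma>) * z / (\<gamma> * z + \<delta>)"
      using False by (simp_all add: w_def field_simps)
    then have "mob_app \<delta> (-\<beta>) (-\<gamma>) \<alpha> (Some w) = Some z"
      using False assms by (simp add: mob_app_def)
    moreover have "mob_app \<alpha> \<beta> \<gamma> \<delta> p = Some w" using Some False by (simp add: mob_app_def w_def)
    ultimately show ?thesis using Some by simp
  qed
qed

lemma bij_mobius: "is_mobius f \<Longrightarrow> bij f"
proof -
  assume "is_mobius f"
  then obtain \<alpha> \<beta> \<gamma> \<delta> where det: "\<alpha> * \<delta> - \<beta> * \<gamma> \<noteq> 0" and f: "f = mob_app \<alpha> \<beta> \<gamma> \<delta>"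
    by (auto simp: is_mobius_def)
  have "\<delta> * \<alpha> - (-\<beta>) * (-\<gamma>) \<noteq> 0" using det by (simp add: algebra_simps)
  from mob_app_inverse[OF this] have "mob_app \<alpha> \<beta> \<gamma> \<delta> (mob_app \<delta> (-\<beta>) (-\<gamma>) \<alpha> p) = p" for p
    by simp
  then show "bij f" unfolding f
    by (intro o_bij[where g = "mob_app \<delta> (-\<beta>) (-\<gamma>) \<alpha>"]) (auto simp: mob_app_inverse[OF det])
qed

lemma mobius_group_inv_image:
  assumes "\<sigma> \<in> mobius_group S"
  shows "inv \<sigma> ` with_infty S \<subseteq> with_infty S"
proof -
  have "\<sigma> ` with_infty S = with_infty S" "inj \<sigma>"
    using assms bij_mobius bij_is_inj by (auto simp: mobius_group_def)
  then show ?thesis by (metis image_inv_f_f order_refl)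
qed

text \<open>Multiplying 1/(\<sigma> z - \<sigma> u) by \<sigma>'(z) gives 1/(z - u) up to a term that does not depend on u;
  it cancels in the differences x_{\<sigma> c} - x_{\<sigma> \<infinity>} produced by the action.\<close>
lemma mob_app_rdiff:
  assumes det: "\<alpha> * \<delta> - \<beta> * \<gamma> \<noteq> 0" and D: "\<gamma> * z + \<delta> \<noteq> 0"
    and s: "s = (\<alpha> * z + \<beta>) / (\<gamma> * z + \<delta>)" and u: "u \<noteq> Some z"
  shows "(\<alpha> * \<delta> - \<beta> * \<gamma>) / (\<gamma> * z + \<delta>) ^ 2 * rdiff s (mob_app \<alpha> \<beta> \<gamma> \<delta> u)
         = rdiff z u - \<gamma> / (\<gamma> * z + \<delta>)"
proof (cases u)
  case None
  show ?thesis
  proof (cases "\<gamma> = 0")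
    case True
    then show ?thesis using None by (simp add: mob_app_def)
  next
    case False
    have "s - \<alpha> / \<gamma> = - (\<alpha> * \<delta> - \<beta> * \<gamma>) / (\<gamma> * (\<gamma> * z + \<delta>))"
      using False D by (simp add: s field_simps)
    then have "rdiff s (mob_app \<alpha> \<beta> \<gamma> \<delta> u) = - (\<gamma> * (\<gamma> * z + \<delta>)) / (\<alpha> * \<delta> - \<beta> * \<gamma>)"
      using None False det D by (simp add: mob_app_def) (metis minus_diff_eq minus_divide_right)
    moreover have "K \<noteq> 0 \<Longrightarrow> N \<noteq> 0 \<Longrightarrow> K / N ^ 2 * (- (g * N) / K) = - g / N" for K N g :: complex
      by (simp add: power2_eq_square field_simps)
    ultimately show ?thesis using None det D by simp
  qed
next
  case (Some v)
  have zv: "z - v \<noteq> 0" using u Some by auto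
  show ?thesis
  proof (cases "\<gamma> * v + \<delta> = 0")
    case True
    then have "\<gamma> \<noteq> 0" using det by auto
    with True have "z - v = (\<gamma> * z + \<delta>) / \<gamma>" by (simp add: field_simps)
    with Some True \<open>\<gamma> \<noteq> 0\<close> D show ?thesis by (simp add: mob_app_def)
  next
    case False
    have e: "s - (\<alpha> * v + \<beta>) / (\<gamma> * v + \<delta>)
           = (\<alpha> * \<delta> - \<beta> * \<gamma>) * (z - v) / ((\<gamma> * z + \<delta>) * (\<gamma> * v + \<delta>))"
      using False D by (simp add: s field_simps)
    have "K \<noteq> 0 \<Longrightarrow> N \<noteq> 0 \<Longrightarrow> M \<noteq> 0 \<Longrightarrow> Z \<noteq> 0 \<Longrightarrow>
          K / N ^ 2 * (1 / (K * Z / (N * M))) = M / (N * Z)" for K N M Z :: complex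
      by (simp add: power2_eq_square field_simps)
    from this[OF det D False zv]
    have "(\<alpha> * \<delta> - \<beta> * \<gamma>) / (\<gamma> * z + \<delta>) ^ 2 * (1 / (s - (\<alpha> * v + \<beta>) / (\<gamma> * v + \<delta>)))
          = (\<gamma> * v + \<delta>) / ((\<gamma> * z + \<delta>) * (z - v))"
      unfolding e .
    also have "\<dots> = 1 / (z - v) - \<gamma> / (\<gamma> * z + \<delta>)"
      using D zv by (simp add: field_simps)
    finally show ?thesis using Some False by (simp add: mob_app_def)
  qed
qed

lemma mob_app_rdiff_diff:
  assumes det: "\<alpha> * \<delta> - \<beta> * \<gamma> \<noteq> 0" and z: "mob_app \<alpha> \<beta> \<gamma> \<delta> (Some z) = Some s"
    and "p \<noteq> Some z" "q \<noteq> Some z"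
  shows "(rdiff s (mob_app \<alpha> \<beta> \<gamma> \<delta> p) - rdiff s (mob_app \<alpha> \<beta> \<gamma> \<delta> q))
           * ((\<alpha> * \<delta> - \<beta> * \<gamma>) / (\<gamma> * z + \<delta>) ^ 2) = rdiff z p - rdiff z q"
proof -
  have D: "\<gamma> * z + \<delta> \<noteq> 0" and s: "s = (\<alpha> * z + \<beta>) / (\<gamma> * z + \<delta>)"
    using z by (auto simp: mob_app_def split: if_splits)
  let ?K = "(\<alpha> * \<delta> - \<beta> * \<gamma>) / (\<gamma> * z + \<delta>) ^ 2"
  have "(rdiff s (mob_app \<alpha> \<beta> \<gamma> \<delta> p) - rdiff s (mob_app \<alpha> \<beta> \<gamma> \<delta> q)) * ?K
      = ?K * rdiff s (mob_app \<alpha> \<beta> \<gamma> \<delta> p) - ?K * rdiff s (mob_app \<alpha> \<beta> \<gamma> \<delta> q)"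
    by (simp only: left_diff_distrib mult.commute)
  also have "\<dots> = rdiff z p - rdiff z q"
    using mob_app_rdiff[OF det D s assms(3)] mob_app_rdiff[OF det D s assms(4)] by simp
  finally show ?thesis .
qed

lemma mob_app_has_derivative:
  assumes z: "mob_app \<alpha> \<beta> \<gamma> \<delta> (Some z) = Some s" and G: "(G has_field_derivative G') (at s)"
  shows "((\<lambda>y. G (the (mob_app \<alpha> \<beta> \<gamma> \<delta> (Some y)))) has_field_derivative
           G' * ((\<alpha> * \<delta> - \<beta> * \<gamma>) / (\<gamma> * z + \<delta>) ^ 2)) (at z)"
proof -
  have D: "\<gamma> * z + \<delta> \<noteq> 0" and s: "s = (\<alpha> * z + \<beta>) / (\<gamma> * z + \<delta>)"
    using z by (auto simp: mob_app_def split: if_splits)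
  have "((\<lambda>y. (\<alpha> * y + \<beta>) / (\<gamma> * y + \<delta>)) has_field_derivative
      (\<alpha> * \<delta> - \<beta> * \<gamma>) / (\<gamma> * z + \<delta>) ^ 2) (at z)"
    using D by (auto intro!: derivative_eq_intros simp: power2_eq_square algebra_simps)
  from DERIV_chain2[OF G[unfolded s] this]
  show ?thesis
    by (rule has_field_derivative_transform_within_open[where S = "{y. \<gamma> * y + \<delta> \<noteq> 0}"])
       (use D in \<open>auto simp: mob_app_def intro!: open_Collect_neq continuous_intros\<close>)
qed

context Li_ab
begin

lemma LiP_pmul_xl_has_derivative:
  assumes p: "p \<in> with_infty S" and Q: "poly_over S Q" and s: "s \<in> U"
  shows "((\<lambda>y. LiP L (pmul (xl p) Q) y) has_field_derivative rdiff s p * LiP L Q s) (at s)"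
proof (cases p)
  case None
  then show ?thesis by (simp add: pmul_def LiP_def)
next
  case (Some c)
  have "((\<lambda>y. \<Sum>x\<leftarrow>Q. fst x * L (c # snd x) y) has_field_derivative
          (\<Sum>x\<leftarrow>Q. fst x * (L (snd x) s / (s - c)))) (at s)"
  proof (rule has_field_derivative_sum_list)
    fix x assume "x \<in> set Q"
    then have "set (c # snd x) \<subseteq> S" using p Q Some poly_over_set_snd by auto
    from DERIV_cmult[OF L_Cons_has_derivative[OF this s]]
    show "((\<lambda>y. fst x * L (c # snd x) y) has_field_derivative fst x * (L (snd x) s / (s - c))) (at s)" .
  qed
  moreover have "LiP L (pmul (xl p) Q) y = (\<Sum>x\<leftarrow>Q. fst x * L (c # snd x) y)" for y
    by (simp add: Some pmul_letter LiP_def case_prod_beta o_def)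
  moreover have "(\<Sum>x\<leftarrow>Q. fst x * (L (snd x) s / (s - c))) = rdiff s p * LiP L Q s"
    unfolding LiP_def Some by (induction Q) (auto simp: add_divide_distrib)
  ultimately show ?thesis by simp
qed

lemma LiP_act_letter_has_derivative:
  assumes f: "f ` with_infty S \<subseteq> with_infty S" and c: "c \<in> S" and w: "poly_over S w"
    and s: "s \<in> U"
  shows "((\<lambda>y. LiP L (act f (pmul [(1, [c])] w)) y) has_field_derivative
          (rdiff s (f (Some c)) - rdiff s (f None)) * LiP L (act f w) s) (at s)"
proof -
  define P where "P = psub (xl (f (Some c))) (xl (f None))"
  define K where "K = rdiff s (f (Some c)) - rdiff s (f None)"
  have fc: "f (Some c) \<in> with_infty S" and f_infty: "f None \<in> with_infty S" using f c by auto
  have "LiP L (act f (pmul [(1, [c])] w)) y = (\<Sum>x\<leftarrow>w. fst x * LiP L (pmul P (act_word f (snd x))) y)"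
    for y
    by (simp add: pmul_letter LiP_act act_word_Cons P_def case_prod_beta o_def)
  moreover have "((\<lambda>y. \<Sum>x\<leftarrow>w. fst x * LiP L (pmul P (act_word f (snd x))) y) has_field_derivative
      (\<Sum>x\<leftarrow>w. fst x * (K * LiP L (act_word f (snd x)) s))) (at s)"
  proof (rule has_field_derivative_sum_list)
    fix x assume "x \<in> set w"
    then have "set (snd x) \<subseteq> S" using w by (rule poly_over_set_snd[rotated])
    then have Q: "poly_over S (act_word f (snd x))" by (rule poly_over_act_word[OF f])
    have "((\<lambda>y. LiP L (pmul P (act_word f (snd x))) y) has_field_derivative
        K * LiP L (act_word f (snd x)) s) (at s)"
      using DERIV_diff[OF LiP_pmul_xl_has_derivative[OF fc Q s] LiP_pmul_xl_has_derivative[OF f_infty Q s]]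
      by (simp add: P_def K_def LiP_pmul_psub algebra_simps)
    then show "((\<lambda>y. fst x * LiP L (pmul P (act_word f (snd x))) y) has_field_derivative
        fst x * (K * LiP L (act_word f (snd x)) s)) (at s)"
      by (rule DERIV_cmult)
  qed
  moreover have "(\<Sum>x\<leftarrow>w. fst x * (K * LiP L (act_word f (snd x)) s)) = K * LiP L (act f w) s"
    unfolding LiP_act by (induction w) (simp_all add: algebra_simps)
  ultimately show ?thesis by (simp add: K_def)
qed

lemma LiP_act_letter_mobius_has_derivative:
  assumes \<sigma>: "\<sigma> \<in> mobius_group S" and f: "f ` with_infty S \<subseteq> with_infty S" and c: "c \<in> S"
    and w: "poly_over S w" and z: "\<sigma> (Some z) = Some s" and s: "s \<in> U"
    and p: "\<sigma> p = f (Some c)" and q: "\<sigma> q = f None"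
  shows "((\<lambda>y. LiP L (act f (pmul [(1, [c])] w)) (the (\<sigma> (Some y)))) has_field_derivative
          ((rdiff z p - rdiff z q) * LiP L (act f w) s)) (at z)"
proof -
  obtain \<alpha> \<beta> \<gamma> \<delta> where det: "\<alpha> * \<delta> - \<beta> * \<gamma> \<noteq> 0" and \<sigma>_eq: "\<sigma> = mob_app \<alpha> \<beta> \<gamma> \<delta>"
    using \<sigma> by (auto simp: mobius_group_def is_mobius_def)
  have "Some s \<notin> with_infty S" using s not_in_S by auto
  moreover have "f (Some c) \<in> with_infty S" "f None \<in> with_infty S" using f c by auto
  ultimately have "p \<noteq> Some z" "q \<noteq> Some z" using p q z by auto
  let ?K = "(\<alpha> * \<delta> - \<beta> * \<gamma>) / (\<gamma> * z + \<delta>) ^ 2"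
  have "(rdiff s (f (Some c)) - rdiff s (f None)) * LiP L (act f w) s * ?K
      = ((rdiff s (\<sigma> p) - rdiff s (\<sigma> q)) * ?K) * LiP L (act f w) s"
    by (simp only: p q ac_simps)
  also have "\<dots> = (rdiff z p - rdiff z q) * LiP L (act f w) s"
    using mob_app_rdiff_diff[OF det z[unfolded \<sigma>_eq] \<open>p \<noteq> Some z\<close> \<open>q \<noteq> Some z\<close>]
    by (simp add: \<sigma>_eq)
  finally show ?thesis
    using mob_app_has_derivative[OF z[unfolded \<sigma>_eq] LiP_act_letter_has_derivative[OF f c w s]]
    by (simp add: \<sigma>_eq)
qed

end

theorem mainTheorem5:
  fixes S :: "complex set" and a b c z s :: complex
    and \<sigma> \<tau> :: "complex option \<Rightarrow> complex option"
    and w :: ncpoly and U V :: "complex set"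
    and L :: "complex list \<Rightarrow> complex \<Rightarrow> complex"
  assumes "finite S" and "a \<in> S" and "b \<in> S" and "a \<noteq> b"
    and "\<sigma> \<in> mobius_group S" and "\<tau> \<in> mobius_group S"
    and "c \<in> S" and "poly_over S w"
    and "Li_domain S b U V" and "is_Li_ab S a b U V L"
    and "\<sigma> (Some z) = Some s" and "s \<in> U"
  shows "((\<lambda>y. LiP L (act (inv \<tau>) (pmul [(1, [c])] w)) (the (\<sigma> (Some y))))
           has_field_derivative
           ((rdiff z (inv (\<tau> \<circ> \<sigma>) (Some c)) - rdiff z (inv (\<tau> \<circ> \<sigma>) None))
              * LiP L (act (inv \<tau>) w) s)) (at z)
       \<and> ((\<lambda>y. LiP L (act \<sigma> (pmul [(1, [c])] w)) (the (\<sigma> (Some y))))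
           has_field_derivative (1 / (z - c) * LiP L (act \<sigma> w) s)) (at z)"
proof -
  interpret Li_ab S a b U V L using assms(1,3,4,9,10) by unfold_locales
  have "bij \<sigma>" "bij \<tau>" using assms(5,6) bij_mobius by (auto simp: mobius_group_def)
  then have \<sigma>_inv_comp: "\<sigma> (inv (\<tau> \<circ> \<sigma>) x) = inv \<tau> x" for x
    by (simp add: o_inv_distrib bij_is_surj surj_f_inv_f)
  have "\<sigma> ` with_infty S \<subseteq> with_infty S" using assms(5) by (simp add: mobius_group_def)
  from LiP_act_letter_mobius_has_derivative[OF assms(5) this assms(7,8,11,12) refl refl]
  have "((\<lambda>y. LiP L (act \<sigma> (pmul [(1, [c])] w)) (the (\<sigma> (Some y))))
           has_field_derivative (1 / (z - c) * LiP L (act \<sigma> w) s)) (at z)"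
    by simp
  moreover note LiP_act_letter_mobius_has_derivative[OF assms(5) mobius_group_inv_image[OF assms(6)]
      assms(7,8,11,12) \<sigma>_inv_comp \<sigma>_inv_comp]
  ultimately show ?thesis by simp
qed

end
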